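(* Let $d\in\{2,3\}$, $k\ge 2$, and let $\mathcal P=\{p_1,\dots,p_k\}$ be distinct points in $\mathbb R^d$. For $x\notin\mathcal P$ let $u_i(x)=\frac{p_i-x}{\|p_i-x\|}$, and for $x\notin\mathcal P$ with $\sum_{i=1}^k u_i(x)\neq0$ let $v(x)=\frac{\sum_{i=1}^k u_i(x)}{\|\sum_{i=1}^k u_i(x)\|}$. Let $S(x)=\sum_{1\le i<j\le k}u_i(x)^\top u_j(x)$ be the sum of the cosines of the pairwise angles between the bearings. Then at every such $x$, the directional derivative of $S$ in the direction $v(x)$ satisfies $\nabla S(x)^\top v(x)\le 0$, with strict inequality unless $x$ and all points of $\mathcal P$ lie on a common line. In other words, moving in the direction $v$ decreases the sum of the cosines of the pairwise angles between the bearings $u_i$.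
   Context: $u_i(x)$ is the bearing (unit direction) from the position $x$ to the landmark $p_i$. The points with $\sum_i u_i(x)=0$ (outside $\mathcal P$) are geometric medians of $\mathcal P$. *)

theory Defs
  imports "HOL-Analysis.Analysis"
begin

definition bearing :: "(nat \<Rightarrow> 'a::euclidean_space) \<Rightarrow> nat \<Rightarrow> 'a \<Rightarrow> 'a" where
  "bearing p i x = (p i - x) /\<^sub>R norm (p i - x)"

definition bearing_sum :: "nat \<Rightarrow> (nat \<Rightarrow> 'a::euclidean_space) \<Rightarrow> 'a \<Rightarrow> 'a" where
  "bearing_sum k p x = (\<Sum>i<k. bearing p i x)"

definition vdir :: "nat \<Rightarrow> (nat \<Rightarrow> 'a::euclidean_space) \<Rightarrow> 'a \<Rightarrow> 'a" where
  "vdir k p x = bearing_sum k p x /\<^sub>R norm (bearing_sum k p x)"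

definition cos_sum :: "nat \<Rightarrow> (nat \<Rightarrow> 'a::euclidean_space) \<Rightarrow> 'a \<Rightarrow> real" where
  "cos_sum k p x = (\<Sum>j<k. \<Sum>i<j. bearing p i x \<bullet> bearing p j x)"

end

theory Submission
  imports Defs
begin

(* Off the landmarks the bearings u_i are unit vectors, so S = (|U|^2 - k)/2 with U = sum_i u_i.
   The derivative of u_i is h |-> -(h - (u_i . h) u_i)/r_i with r_i = |p_i - x|, hence the
   derivative of S in the direction v = U/|U| is -(1/|U|) sum_i |U - (u_i . U) u_i|^2 / r_i <= 0.
   It vanishes only if U is parallel to every u_i, i.e. if all p_i lie on the line through x
   in direction U. *)

definition reject :: "'a::real_inner \<Rightarrow> 'a \<Rightarrow> 'a" where
  "reject u h = h - (u \<bullet> h) *\<^sub>R u"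

lemma reject_scaleR: "reject u (c *\<^sub>R h) = c *\<^sub>R reject u h"
  by (simp add: reject_def algebra_simps)

lemma reject_minus: "reject u (- h) = - reject u h"
  by (simp add: reject_def)

lemma inner_reject_self:
  assumes "norm u = 1"
  shows "w \<bullet> reject u w = (norm (reject u w))\<^sup>2"
proof -
  have "u \<bullet> reject u w = 0"
    using assms by (simp add: reject_def inner_diff_right norm_eq_1)
  moreover have "w = reject u w + (u \<bullet> w) *\<^sub>R u"
    by (simp add: reject_def)
  ultimately have "w \<bullet> reject u w = reject u w \<bullet> reject u w"
    by (metis inner_add_left inner_commute inner_scaleR_left mult_zero_right add_0_right)
  then show ?thesis
    by (simp add: power2_norm_eq_inner)
qed

lemma has_derivative_sgn:
  fixes y :: "'a::real_inner"
  assumes "y \<noteq> 0"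
  shows "(sgn has_derivative (\<lambda>h. reject (sgn y) h /\<^sub>R norm y)) (at y)"
proof -
  have sgn_eq: "sgn = (\<lambda>z. inverse (norm z) *\<^sub>R z)"
    by (simp add: fun_eq_iff sgn_div_norm divide_inverse_commute)
  have "((\<lambda>z. inverse (norm z) *\<^sub>R z) has_derivative
      (\<lambda>h. inverse (norm y) *\<^sub>R h - (inverse (norm y) * (h \<bullet> sgn y) * inverse (norm y)) *\<^sub>R y)) (at y)"
    using has_derivative_scaleR[OF Deriv.has_derivative_inverse[OF _ has_derivative_norm[OF assms]]
        has_derivative_ident] assms by simp
  then show ?thesis
    unfolding sgn_eq
    by (rule has_derivative_eq_rhs)
      (use assms in \<open>auto simp: fun_eq_iff reject_def inner_commute algebra_simps power2_eq_square\<close>)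
qed

lemma bearing_eq_sgn: "bearing p i x = sgn (p i - x)"
  by (simp add: bearing_def sgn_div_norm)

lemma norm_bearing: "x \<noteq> p i \<Longrightarrow> norm (bearing p i x) = 1"
  by (simp add: bearing_def)

lemma bearing_has_derivative:
  assumes "x \<noteq> p i"
  shows "(bearing p i has_derivative (\<lambda>h. - reject (bearing p i x) h /\<^sub>R norm (p i - x))) (at x)"
proof -
  have "((\<lambda>y. p i - y) has_derivative uminus) (at x)"
    by (auto intro!: derivative_eq_intros)
  from has_derivative_compose[OF this has_derivative_sgn]
  show ?thesis
    using assms by (simp add: o_def bearing_eq_sgn [abs_def] bearing_eq_sgn reject_minus)
qed

lemma sum_pairs_inner:
  fixes f :: "nat \<Rightarrow> 'a::real_inner"
  shows "(\<Sum>j<k. \<Sum>i<j. f i \<bullet> f j) = ((\<Sum>i<k. f i) \<bullet> (\<Sum>i<k. f i) - (\<Sum>i<k. f i \<bullet> f i)) / 2"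
proof (induction k)
  case 0
  then show ?case by simp
next
  case (Suc k)
  have "(\<Sum>i<k. f i \<bullet> f k) = (\<Sum>i<k. f i) \<bullet> f k"
    by (simp add: inner_sum_left)
  with Suc show ?case
    by (simp add: inner_add inner_commute field_simps)
qed

lemma cos_sum_eq:
  assumes "x \<notin> p ` {..<k}"
  shows "cos_sum k p x = (bearing_sum k p x \<bullet> bearing_sum k p x - k) / 2"
proof -
  have "bearing p i x \<bullet> bearing p i x = 1" if "i < k" for i
    using norm_bearing[of x p i] assms that by (auto simp: norm_eq_1)
  then show ?thesis
    by (simp add: cos_sum_def bearing_sum_def sum_pairs_inner)
qed

lemma bearing_sum_has_derivative:
  assumes "x \<notin> p ` {..<k}"
  shows "(bearing_sum k p has_derivative
     (\<lambda>h. - (\<Sum>i<k. reject (bearing p i x) h /\<^sub>R norm (p i - x)))) (at x)"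
proof -
  have "((\<lambda>y. \<Sum>i<k. bearing p i y) has_derivative
      (\<lambda>h. \<Sum>i<k. - reject (bearing p i x) h /\<^sub>R norm (p i - x))) (at x)"
    using assms by (intro has_derivative_sum bearing_has_derivative) auto
  then show ?thesis
    by (simp add: bearing_sum_def [abs_def] sum_negf)
qed

lemma cos_sum_has_derivative:
  assumes "x \<notin> p ` {..<k}"
  shows "(cos_sum k p has_derivative
     (\<lambda>h. - (\<Sum>i<k. bearing_sum k p x \<bullet> reject (bearing p i x) h / norm (p i - x)))) (at x)"
proof (rule has_derivative_transform_within_open)
  let ?U = "bearing_sum k p x"
  let ?D = "\<lambda>h. - (\<Sum>i<k. reject (bearing p i x) h /\<^sub>R norm (p i - x))"
  have "((\<lambda>y. bearing_sum k p y \<bullet> bearing_sum k p y) has_derivative (\<lambda>h. 2 * (?U \<bullet> ?D h))) (at x)"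
    using has_derivative_inner[OF bearing_sum_has_derivative[OF assms] bearing_sum_has_derivative[OF assms]]
    by (simp add: inner_commute[of _ ?U])
  from has_derivative_divide'[OF has_derivative_diff[OF this has_derivative_const[of "real k"]]
      has_derivative_const[of 2], simplified]
  have "((\<lambda>y. (bearing_sum k p y \<bullet> bearing_sum k p y - k) / 2) has_derivative (\<lambda>h. ?U \<bullet> ?D h)) (at x)"
    by simp
  then show "((\<lambda>y. (bearing_sum k p y \<bullet> bearing_sum k p y - k) / 2) has_derivative
      (\<lambda>h. - (\<Sum>i<k. ?U \<bullet> reject (bearing p i x) h / norm (p i - x)))) (at x)"
    by (rule has_derivative_eq_rhs) (simp add: fun_eq_iff inner_sum_right divide_inverse_commute)
  show "open (- p ` {..<k})"
    by (simp add: open_Compl finite_imp_closed)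
  show "x \<in> - p ` {..<k}"
    using assms by simp
  show "(bearing_sum k p y \<bullet> bearing_sum k p y - k) / 2 = cos_sum k p y" if "y \<in> - p ` {..<k}" for y
    using that cos_sum_eq[of y p k] by simp
qed

lemma cos_sum_derivative_vdir:
  assumes "x \<notin> p ` {..<k}"
  shows "frechet_derivative (cos_sum k p) (at x) (vdir k p x) =
    - (\<Sum>i<k. (norm (reject (bearing p i x) (bearing_sum k p x)))\<^sup>2 / norm (p i - x))
      / norm (bearing_sum k p x)"
proof -
  let ?U = "bearing_sum k p x"
  have term_eq: "?U \<bullet> reject (bearing p i x) (vdir k p x) / norm (p i - x) =
      (norm (reject (bearing p i x) ?U))\<^sup>2 / norm (p i - x) / norm ?U" if "i < k" for i
  proof -
    have "norm (bearing p i x) = 1"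
      using assms that by (auto intro: norm_bearing)
    then show ?thesis
      by (simp add: vdir_def reject_scaleR inner_reject_self field_simps)
  qed
  have "frechet_derivative (cos_sum k p) (at x) (vdir k p x) =
      - (\<Sum>i<k. ?U \<bullet> reject (bearing p i x) (vdir k p x) / norm (p i - x))"
    by (simp add: frechet_derivative_at[OF cos_sum_has_derivative[OF assms], symmetric])
  also have "\<dots> = - (\<Sum>i<k. (norm (reject (bearing p i x) ?U))\<^sup>2 / norm (p i - x) / norm ?U)"
    using term_eq by simp
  finally show ?thesis
    by (simp add: sum_divide_distrib)
qed

lemma collinear_if_bearings_parallel:
  assumes "x \<notin> p ` {..<k}" and "w \<noteq> 0"
    and parallel: "\<And>i. i < k \<Longrightarrow> reject (bearing p i x) w = 0"
  shows "collinear (insert x (p ` {..<k}))"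
proof -
  have "\<exists>c. p i = x + c *\<^sub>R w" if "i < k" for i
  proof -
    let ?u = "bearing p i x" and ?r = "norm (p i - x)"
    have w_eq: "w = (?u \<bullet> w) *\<^sub>R ?u"
      using parallel[OF that] by (simp add: reject_def)
    have c_nz: "?u \<bullet> w \<noteq> 0"
    proof
      assume "?u \<bullet> w = 0"
      with w_eq have "w = 0"
        by simp
      with assms(2) show False ..
    qed
    have "p i - x = ?r *\<^sub>R ?u"
    proof -
      have "p i \<noteq> x"
        using assms(1) that by auto
      then show ?thesis
        by (simp add: bearing_def)
    qed
    also have "\<dots> = (?r / (?u \<bullet> w)) *\<^sub>R ((?u \<bullet> w) *\<^sub>R ?u)"
      using c_nz by simp
    also have "\<dots> = (?r / (?u \<bullet> w)) *\<^sub>R w"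
      by (simp only: w_eq [symmetric])
    finally have "p i = x + (?r / (?u \<bullet> w)) *\<^sub>R w"
      by (simp add: algebra_simps)
    then show ?thesis ..
  qed
  then have "\<forall>z \<in> insert x (p ` {..<k}). \<exists>c. z = x + c *\<^sub>R w"
    by (metis imageE insertE lessThan_iff add_0_right scale_zero_left)
  then show ?thesis
    unfolding collinear_alt by blast
qed

theorem theorem1:
  fixes p :: "nat \<Rightarrow> 'a::euclidean_space" and k :: nat and x :: 'a
  assumes "DIM('a) = 2 \<or> DIM('a) = 3"
    and "k \<ge> 2"
    and "inj_on p {..<k}"
    and "x \<notin> p ` {..<k}"
    and "bearing_sum k p x \<noteq> 0"
  shows "cos_sum k p differentiable (at x)
    \<and> frechet_derivative (cos_sum k p) (at x) (vdir k p x) \<le> 0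
    \<and> (\<not> collinear (insert x (p ` {..<k}))
         \<longrightarrow> frechet_derivative (cos_sum k p) (at x) (vdir k p x) < 0)"
proof -
  let ?U = "bearing_sum k p x"
  define e where "e i = (norm (reject (bearing p i x) ?U))\<^sup>2 / norm (p i - x)" for i
  have deriv_eq: "frechet_derivative (cos_sum k p) (at x) (vdir k p x) = - sum e {..<k} / norm ?U"
    unfolding e_def using cos_sum_derivative_vdir[OF assms(4)] .
  have e_nonneg: "e i \<ge> 0" for i
    by (simp add: e_def)
  have "sum e {..<k} > 0" if not_collinear: "\<not> collinear (insert x (p ` {..<k}))"
  proof -
    obtain i where "i < k" "reject (bearing p i x) ?U \<noteq> 0"
      using collinear_if_bearings_parallel[OF assms(4,5)] not_collinear by blast
    moreover have "p i \<noteq> x"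
      using assms(4) \<open>i < k\<close> by auto
    ultimately have "e i > 0"
      by (simp add: e_def)
    with \<open>i < k\<close> show ?thesis
      using e_nonneg by (intro sum_pos2) auto
  qed
  moreover have "sum e {..<k} \<ge> 0"
    using e_nonneg by (simp add: sum_nonneg)
  ultimately show ?thesis
    using cos_sum_has_derivative[OF assms(4)] assms(5)
    by (auto simp: deriv_eq differentiable_def divide_neg_pos)
qed

end
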